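(* Let $N\in\mathbb{N}\setminus\{1\}$. (i) For $k\in\mathbb{Z}_+$ and $s\in\mathbb{R}$, $$\gamma_N^{s,k}=k!\sum_{l=0}^{\lfloor k/2\rfloor}\frac{(k-2l)!}{(2l)!}\Bigl(\sum_{n=\lceil k/2\rceil}^{k-l}2^{2n-k}\binom{s/2}{n}\binom{n}{k-n}\binom{k-n}{l}\Bigr)^2\gamma_{N-1}^{2l,2l}.$$ In particular, for $m\in\mathbb{Z}_+$, $$\gamma_N^{2m,2m}=(2m)!\sum_{l=0}^m\frac{(2(m-l))!}{(2l)!}\binom{m}{l}^2\gamma_{N-1}^{2l,2l}.$$ (ii) For $k\in\mathbb{N}$, $$\ell_N^k=k!\sum_{l=0}^{\lfloor k/2\rfloor}\frac{(k-2l)!}{(2l)!}\Bigl(\sum_{n=\lceil k/2\rceil}^{k-l}2^{2n-k}\frac{(-1)^n}{2n}\binom{n}{k-n}\binom{k-n}{l}\Bigr)^2\gamma_{N-1}^{2l,2l}.$$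
   Context: For $M\in\mathbb{N}$: $|x|_M$ is the Euclidean norm on $\mathbb{R}^M$, $I_M=\{1,\ldots,M\}$, $D_i=\partial_{x_{i_1}}\cdots\partial_{x_{i_k}}$ for $i\in I_M^k$, $|\nabla_M^k u(x)|_{M^k}=\bigl(\sum_{i\in I_M^k}(D_iu(x))^2\bigr)^{1/2}$ (for $k=0$ this is $|u(x)|$). For $k\in\mathbb{Z}_+$, $s\in\mathbb{R}$, $\gamma_M^{s,k}$ denotes the constant value of $(|x|_M^{k-s}|\nabla_M^k[|x|_M^s]|_{M^k})^2$ on $\mathbb{R}^M\setminus\{0\}$ (it is known to be constant), and for $k\in\mathbb{N}$, $\ell_M^k$ denotes the constant value of $(|x|_M^{k}|\nabla_M^k[\log|x|_M]|_{M^k})^2$ on $\mathbb{R}^M\setminus\{0\}$. $\binom{\nu}{k}=(\nu)_k/k!$ with $(\nu)_k=\prod_{j=0}^{k-1}(\nu-j)$, $(\nu)_0=1$. *)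

theory Defs
  imports "HOL-Analysis.Analysis"
begin

text \<open>Points of R^M are represented as functions nat => real; only the coordinates
  0..M-1 are used (index i here corresponds to index i+1 in the paper).\<close>

definition enorm :: "nat \<Rightarrow> (nat \<Rightarrow> real) \<Rightarrow> real" where
  "enorm M x = sqrt (\<Sum>i<M. (x i)\<^sup>2)"

definition pdiff :: "nat \<Rightarrow> ((nat \<Rightarrow> real) \<Rightarrow> real) \<Rightarrow> (nat \<Rightarrow> real) \<Rightarrow> real" where
  "pdiff i u = (\<lambda>x. deriv (\<lambda>t. u (x(i := x i + t))) 0)"

fun iter_pdiff :: "nat list \<Rightarrow> ((nat \<Rightarrow> real) \<Rightarrow> real) \<Rightarrow> (nat \<Rightarrow> real) \<Rightarrow> real" where
  "iter_pdiff [] u = u"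
| "iter_pdiff (i # is) u = pdiff i (iter_pdiff is u)"

definition multi_idx :: "nat \<Rightarrow> nat \<Rightarrow> nat list set" where
  "multi_idx M k = {is. length is = k \<and> set is \<subseteq> {..<M}}"

definition grad_norm :: "nat \<Rightarrow> nat \<Rightarrow> ((nat \<Rightarrow> real) \<Rightarrow> real) \<Rightarrow> (nat \<Rightarrow> real) \<Rightarrow> real" where
  "grad_norm M k u x = sqrt (\<Sum>is\<in>multi_idx M k. (iter_pdiff is u x)\<^sup>2)"

definition e1 :: "nat \<Rightarrow> real" where
  "e1 = (\<lambda>i. if i = 0 then 1 else 0)"

text \<open>gamma_M^{s,k}: the (known to be constant) value of
  (|x|^{k-s} |nabla^k |x|^s|)^2 on R^M \ {0}, evaluated at x = e1.\<close>
definition gamma :: "nat \<Rightarrow> real \<Rightarrow> nat \<Rightarrow> real" where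
  "gamma M s k = (enorm M e1 powr (real k - s) * grad_norm M k (\<lambda>x. enorm M x powr s) e1)\<^sup>2"

text \<open>ell_M^k: the constant value of (|x|^k |nabla^k log|x||)^2, evaluated at e1.\<close>
definition ell :: "nat \<Rightarrow> nat \<Rightarrow> real" where
  "ell M k = (enorm M e1 ^ k * grad_norm M k (\<lambda>x. ln (enorm M x)) e1)\<^sup>2"

end

(*
  Split x = (x_0, x') with x' = (x_1, ..., x_{N-1}) and write a radial function as
  u(x) = G(x_0^2 + |x'|^2).  By induction on the multi-index, every derivative D_i u is a sum of
  terms w * x'^U * (d/da)^p G^(c)(a^2 + r) evaluated at a = x_0, r = |x'|^2: differentiating in
  x_0 only raises p, differentiating in x_j (j >= 1) either hits |x'|^2 or a factor of x'^U.  At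
  the basis vector e_1 every term with a nonconstant monomial vanishes, so D_i u(e_1) factors
  into a weight depending only on the entries v of i different from 0, times the axial profile
  (d/da)^p G^(|v|/2)(a^2) at a = 1, where p is the number of zero entries; the weight vanishes
  for odd |v|.  Applied to |x'|^(2l) = r^l the same computation shows that the squared weights
  over |v| = 2l sum to gamma_{N-1}^{2l,2l} / (l!)^2.  Counting multi-indices by their number of
  zero entries and expanding the axial profile in closed form gives the recursion, with
  G(t) = t^(s/2) for gamma and G(t) = ln t / 2 for ell.
*)
theory Submission
  imports Defs
begin

section \<open>Derivatives of polynomial-radial expressions\<close>

text \<open>A term \<open>(w, U, p, c)\<close> stands for \<open>w * (\<Prod>i\<leftarrow>U. x i) * H p c (x 0) (tail_sqnorm N x)\<close>,
  where \<open>H p c\<close> plays the role of the derivative of order \<open>p\<close> in the first and \<open>c\<close> in the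
  second argument of a function \<open>H 0 0\<close>.\<close>
type_synonym mterm = "real \<times> nat list \<times> nat \<times> nat"

fun deletions :: "nat \<Rightarrow> nat list \<Rightarrow> nat list list" where
  "deletions j [] = []"
| "deletions j (i # U) = (if i = j then [U] else []) @ map ((#) i) (deletions j U)"

fun diff_mterm :: "nat \<Rightarrow> mterm \<Rightarrow> mterm list" where
  "diff_mterm j (w, U, p, c) = (if j = 0 then [(w, U, Suc p, c)]
     else (2 * w, j # U, p, Suc c) # map (\<lambda>V. (w, V, p, c)) (deletions j U))"

fun diff_mterms :: "nat list \<Rightarrow> mterm list" where
  "diff_mterms [] = [(1, [], 0, 0)]"
| "diff_mterms (j # is) = concat (map (diff_mterm j) (diff_mterms is))"

definition tail_sqnorm :: "nat \<Rightarrow> (nat \<Rightarrow> real) \<Rightarrow> real" where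
  "tail_sqnorm N x = (\<Sum>i\<in>{1..<N}. (x i)\<^sup>2)"

fun eval_mterm ::
  "nat \<Rightarrow> (nat \<Rightarrow> nat \<Rightarrow> real \<Rightarrow> real \<Rightarrow> real) \<Rightarrow> mterm \<Rightarrow> (nat \<Rightarrow> real) \<Rightarrow> real" where
  "eval_mterm N H (w, U, p, c) x = w * prod_list (map x U) * H p c (x 0) (tail_sqnorm N x)"

lemma DERIV_prod_list_line:
  "((\<lambda>t. prod_list (map (x(j := x j + t)) U)) has_real_derivative
     sum_list (map (\<lambda>V. prod_list (map x V)) (deletions j U))) (at 0)"
proof (induction U)
  case Nil
  then show ?case by simp
next
  case (Cons i U)
  have d1: "((\<lambda>t. (x(j := x j + t)) i) has_real_derivative (if i = j then 1 else 0)) (at 0)"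
    by (cases "i = j") (auto intro!: derivative_eq_intros)
  have "((\<lambda>t. (x(j := x j + t)) i * prod_list (map (x(j := x j + t)) U)) has_real_derivative
      (if i = j then 1 else 0) * prod_list (map (x(j := x j + 0)) U)
      + (\<Sum>V\<leftarrow>deletions j U. prod_list (map x V)) * (x(j := x j + 0)) i) (at 0)"
    by (rule DERIV_mult[OF d1 Cons.IH])
  then show ?case
    by (cases "i = j") (simp_all add: sum_list_const_mult[symmetric] o_def mult.commute del: fun_upd_apply)
qed

lemma tail_sqnorm_upd_notin: "j \<notin> {1..<N} \<Longrightarrow> tail_sqnorm N (x(j := v)) = tail_sqnorm N x"
  unfolding tail_sqnorm_def by (rule sum.cong) auto

lemma tail_sqnorm_upd:
  "j \<in> {1..<N} \<Longrightarrow> tail_sqnorm N (x(j := v)) = tail_sqnorm N x - (x j)\<^sup>2 + v\<^sup>2"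
proof -
  assume j: "j \<in> {1..<N}"
  have "tail_sqnorm N (x(j := v)) = v\<^sup>2 + (\<Sum>i\<in>{1..<N}-{j}. (x i)\<^sup>2)"
    unfolding tail_sqnorm_def using j by (subst sum.remove[of _ j]) (auto intro!: sum.cong)
  moreover have "tail_sqnorm N x = (x j)\<^sup>2 + (\<Sum>i\<in>{1..<N}-{j}. (x i)\<^sup>2)"
    unfolding tail_sqnorm_def using j by (subst sum.remove[of _ j]) auto
  ultimately show ?thesis by simp
qed

lemma prod_list_map_upd_notin:
  "j \<notin> set U \<Longrightarrow> prod_list (map (x(j := v)) U) = prod_list (map x U)"
  by (induction U) auto

lemma DERIV_eval_mterm_axis:
  assumes U0: "0 \<notin> set U"
    and ha: "((\<lambda>a. H p c a (tail_sqnorm N x)) has_real_derivative H (Suc p) c (x 0) (tail_sqnorm N x))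
               (at (x 0))"
  shows "((\<lambda>t. eval_mterm N H (w, U, p, c) (x(0 := x 0 + t))) has_real_derivative
           eval_mterm N H (w, U, Suc p, c) x) (at 0)"
proof -
  have line: "eval_mterm N H (w, U, p, c) (x(0 := x 0 + t))
      = w * prod_list (map x U) * H p c (t + x 0) (tail_sqnorm N x)" for t
    using U0 by (simp add: prod_list_map_upd_notin tail_sqnorm_upd_notin add.commute fun_upd_same
        del: fun_upd_apply)
  have "((\<lambda>t. H p c (t + x 0) (tail_sqnorm N x)) has_real_derivative H (Suc p) c (x 0) (tail_sqnorm N x))
      (at 0)"
    using ha DERIV_shift[of "\<lambda>a. H p c a (tail_sqnorm N x)" _ 0 "x 0"] by simp
  then show ?thesis unfolding line by (simp add: DERIV_cmult mult.assoc)
qed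

lemma DERIV_eval_mterm_tail:
  assumes j: "j \<in> {1..<N}"
    and hr: "(H p c (x 0) has_real_derivative H p (Suc c) (x 0) (tail_sqnorm N x)) (at (tail_sqnorm N x))"
  shows "((\<lambda>t. eval_mterm N H (w, U, p, c) (x(j := x j + t))) has_real_derivative
           eval_mterm N H (2 * w, j # U, p, Suc c) x
           + sum_list (map (\<lambda>V. eval_mterm N H (w, V, p, c) x) (deletions j U))) (at 0)"
proof -
  let ?r = "\<lambda>t. tail_sqnorm N x + 2 * x j * t + t\<^sup>2"
  have line: "eval_mterm N H (w, U, p, c) (x(j := x j + t))
      = w * (prod_list (map (x(j := x j + t)) U) * H p c (x 0) (?r t))" for t
    using j by (simp add: tail_sqnorm_upd power2_eq_square algebra_simps)
  have "(?r has_real_derivative 2 * x j) (at 0)"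
    by (auto intro!: derivative_eq_intros)
  then have "((\<lambda>t. H p c (x 0) (?r t)) has_real_derivative H p (Suc c) (x 0) (tail_sqnorm N x) * (2 * x j))
      (at 0)"
    using DERIV_chain2[where f="H p c (x 0)" and x=0] hr by simp
  from DERIV_cmult[OF DERIV_mult[OF DERIV_prod_list_line this], of w]
  show ?thesis unfolding line
    by (simp add: sum_list_const_mult[symmetric] sum_list_mult_const[symmetric] o_def algebra_simps
        del: fun_upd_apply)
qed

lemma DERIV_eval_mterm:
  assumes j: "j < N" and U0: "0 \<notin> set U"
    and hr: "(H p c (x 0) has_real_derivative H p (Suc c) (x 0) (tail_sqnorm N x)) (at (tail_sqnorm N x))"
    and ha: "((\<lambda>a. H p c a (tail_sqnorm N x)) has_real_derivative H (Suc p) c (x 0) (tail_sqnorm N x))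
               (at (x 0))"
  shows "((\<lambda>t. eval_mterm N H (w, U, p, c) (x(j := x j + t))) has_real_derivative
           sum_list (map (\<lambda>t'. eval_mterm N H t' x) (diff_mterm j (w, U, p, c)))) (at 0)"
proof (cases "j = 0")
  case True
  then show ?thesis using DERIV_eval_mterm_axis[where H=H and N=N and x=x, OF U0 ha] by simp
next
  case False
  then have "j \<in> {1..<N}" using j by auto
  then show ?thesis using DERIV_eval_mterm_tail[where H=H and x=x, OF _ hr] False by (simp add: o_def)
qed

lemma deletions_subset: "V \<in> set (deletions j U) \<Longrightarrow> set V \<subseteq> set U"
  by (induction U arbitrary: V) (auto split: if_splits, blast)

lemma diff_mterms_axis_free: "(w, U, p, c) \<in> set (diff_mterms is) \<Longrightarrow> 0 \<notin> set U"
proof (induction "is" arbitrary: w U p c)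
  case Nil then show ?case by simp
next
  case (Cons j "is")
  then obtain w' U' p' c' where t: "(w', U', p', c') \<in> set (diff_mterms is)"
    "(w, U, p, c) \<in> set (diff_mterm j (w', U', p', c'))"
    by auto
  from Cons.IH[OF t(1)] t(2) show ?case
    by (auto split: if_splits dest: deletions_subset)
qed

lemma sum_list_map_concat:
  "sum_list (map f (concat xs)) = sum_list (map (\<lambda>x. sum_list (map f x)) xs)"
  by (induction xs) auto

lemma DERIV_sum_list:
  "(\<And>t. t \<in> set L \<Longrightarrow> ((\<lambda>s. f t s) has_real_derivative f' t) (at 0)) \<Longrightarrow>
   ((\<lambda>s. sum_list (map (\<lambda>t. f t s) L)) has_real_derivative sum_list (map f' L)) (at 0)"
  by (induction L) (auto intro!: derivative_eq_intros)

lemma continuous_line_coord: "continuous (at 0) (\<lambda>t. ((x::nat\<Rightarrow>real)(j := x j + t)) i)"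
  by (cases "i = j") (auto intro!: continuous_intros)

lemma continuous_tail_sqnorm_line:
  "continuous (at 0) (\<lambda>t. tail_sqnorm N ((x::nat\<Rightarrow>real)(j := x j + t)))"
  unfolding tail_sqnorm_def by (intro continuous_intros continuous_line_coord)

lemma eventually_pos_line:
  fixes x :: "nat \<Rightarrow> real" and F :: "(nat \<Rightarrow> real) \<Rightarrow> real"
  assumes "continuous (at 0) (\<lambda>t. F (x(j := x j + t)))" "0 < F x"
  shows "eventually (\<lambda>t. 0 < F (x(j := x j + t))) (nhds 0)"
proof -
  have "((\<lambda>t. F (x(j := x j + t))) \<longlongrightarrow> F x) (at 0)"
    using assms(1) by (simp add: continuous_at)
  then have "eventually (\<lambda>t. 0 < F (x(j := x j + t))) (at 0)"
    using assms(2) by (rule order_tendstoD(1))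
  then show ?thesis using assms(2) by (simp add: eventually_nhds_conv_at)
qed

lemma iter_pdiff_eq_diff_mterms:
  assumes dom: "\<And>x j. x \<in> Dom \<Longrightarrow> j < N \<Longrightarrow> eventually (\<lambda>t. x(j := x j + t) \<in> Dom) (nhds 0)"
    and hr: "\<And>x p c. x \<in> Dom \<Longrightarrow>
      (H p c (x 0) has_real_derivative H p (Suc c) (x 0) (tail_sqnorm N x)) (at (tail_sqnorm N x))"
    and ha: "\<And>x p c. x \<in> Dom \<Longrightarrow>
      ((\<lambda>a. H p c a (tail_sqnorm N x)) has_real_derivative H (Suc p) c (x 0) (tail_sqnorm N x)) (at (x 0))"
    and base: "\<And>x. x \<in> Dom \<Longrightarrow> u x = H 0 0 (x 0) (tail_sqnorm N x)"
    and "set is \<subseteq> {..<N}" "x \<in> Dom"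
  shows "iter_pdiff is u x = sum_list (map (\<lambda>t. eval_mterm N H t x) (diff_mterms is))"
  using assms(5,6)
proof (induction "is" arbitrary: x)
  case Nil
  then show ?case by (simp add: base)
next
  case (Cons j "is")
  let ?D = "sum_list (map (\<lambda>t. sum_list (map (\<lambda>t'. eval_mterm N H t' x) (diff_mterm j t)))
    (diff_mterms is))"
  have D: "((\<lambda>s. sum_list (map (\<lambda>t. eval_mterm N H t (x(j := x j + s))) (diff_mterms is)))
      has_real_derivative ?D) (at 0)"
  proof (rule DERIV_sum_list)
    fix t assume t: "t \<in> set (diff_mterms is)"
    obtain w U p c where tt: "t = (w, U, p, c)" by (cases t) auto
    show "((\<lambda>s. eval_mterm N H t (x(j := x j + s))) has_real_derivative
        sum_list (map (\<lambda>t'. eval_mterm N H t' x) (diff_mterm j t))) (at 0)"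
      unfolding tt using diff_mterms_axis_free t tt Cons.prems by (intro DERIV_eval_mterm hr ha) auto
  qed
  have ev: "eventually (\<lambda>s. iter_pdiff is u (x(j := x j + s))
      = sum_list (map (\<lambda>t. eval_mterm N H t (x(j := x j + s))) (diff_mterms is))) (nhds 0)"
    using dom[of x j] Cons.prems by (auto elim!: eventually_mono intro: Cons.IH)
  have "((\<lambda>s. iter_pdiff is u (x(j := x j + s))) has_real_derivative ?D) (at 0)"
    using DERIV_cong_ev[OF refl ev refl] D by simp
  then have "iter_pdiff (j # is) u x = ?D"
    by (simp add: pdiff_def DERIV_imp_deriv)
  also have "\<dots> = sum_list (map (\<lambda>t. eval_mterm N H t x) (diff_mterms (j # is)))"
    by (simp add: sum_list_map_concat o_def)
  finally show ?case .
qed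

section \<open>Evaluation at the first basis vector\<close>

fun add_axis_order :: "nat \<Rightarrow> mterm \<Rightarrow> mterm" where
  "add_axis_order n (w, U, p, c) = (w, U, p + n, c)"

lemma diff_mterm_add_axis_order:
  "j \<noteq> 0 \<Longrightarrow> diff_mterm j (add_axis_order n t) = map (add_axis_order n) (diff_mterm j t)"
  by (cases t) auto

lemma diff_mterms_axis_split:
  "diff_mterms is = map (add_axis_order (count_list is 0)) (diff_mterms (filter (\<lambda>i. i \<noteq> 0) is))"
proof (induction "is")
  case Nil
  then show ?case by simp
next
  case (Cons j "is")
  show ?case
  proof (cases "j = 0")
    case True
    have "concat (map (diff_mterm 0) L) = map (add_axis_order 1) L" for L
      by (induction L) (auto simp: split_def)
    then have step: "diff_mterms (j # is) = map (add_axis_order 1) (diff_mterms is)"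
      using True by simp
    have "add_axis_order (Suc 0) (add_axis_order n t) = add_axis_order (Suc n) t" for n t
      by (cases t) auto
    then show ?thesis using True Cons.IH step by (simp add: o_def)
  next
    case False
    have "diff_mterms (j # is) = concat (map (diff_mterm j)
        (map (add_axis_order (count_list is 0)) (diff_mterms (filter (\<lambda>i. i \<noteq> 0) is))))"
      using Cons.IH by simp
    also have "\<dots> = map (add_axis_order (count_list is 0))
        (diff_mterms (filter (\<lambda>i. i \<noteq> 0) (j # is)))"
      using False by (simp add: o_def diff_mterm_add_axis_order map_concat)
    finally show ?thesis using False by simp
  qed
qed

lemma length_deletions: "V \<in> set (deletions j U) \<Longrightarrow> Suc (length V) = length U"
  by (induction U arbitrary: V) (auto split: if_splits)

lemma diff_mterms_degree:
  "0 \<notin> set is \<Longrightarrow> (w, U, p, c) \<in> set (diff_mterms is) \<Longrightarrow> p = 0 \<and> 2 * c = length is + length U"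
proof (induction "is" arbitrary: w U p c)
  case Nil then show ?case by simp
next
  case (Cons j "is")
  then obtain w' U' p' c' where t: "(w', U', p', c') \<in> set (diff_mterms is)"
    "(w, U, p, c) \<in> set (diff_mterm j (w', U', p', c'))"
    by auto
  have j0: "j \<noteq> 0" using Cons.prems by auto
  from Cons.IH[OF _ t(1)] Cons.prems(1) have "p' = 0 \<and> 2 * c' = length is + length U'" by auto
  with t(2) j0 show ?case
    by (auto dest: length_deletions)
qed

fun const_part :: "mterm \<Rightarrow> real" where
  "const_part (w, U, p, c) = (if U = [] then w else 0)"

definition const_coeff :: "nat list \<Rightarrow> real" where
  "const_coeff is = sum_list (map const_part (diff_mterms is))"

lemma const_coeff_odd:
  assumes "0 \<notin> set v" "odd (length v)"
  shows "const_coeff v = 0"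
proof -
  have "map const_part (diff_mterms v) = map (\<lambda>_. 0) (diff_mterms v)"
  proof (rule map_cong[OF refl])
    fix t assume t: "t \<in> set (diff_mterms v)"
    obtain w U p c where tt: "t = (w, U, p, c)" by (cases t) auto
    have "2 * c = length v + length U" using diff_mterms_degree[of v w U p c] assms t tt by auto
    then have "U \<noteq> []" using assms(2) by (metis add.right_neutral dvd_triv_left list.size(3))
    then show "const_part t = 0" using tt by simp
  qed
  then show ?thesis unfolding const_coeff_def by (metis sum_list_0)
qed

lemma prod_list_map_e1:
  "0 \<notin> set U \<Longrightarrow> prod_list (map e1 U) = (if U = [] then 1 else 0)"
  by (induction U) (auto simp: e1_def)

lemma tail_sqnorm_e1: "tail_sqnorm N e1 = 0"
  by (simp add: tail_sqnorm_def e1_def)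

lemma diff_mterms_at_e1:
  "sum_list (map (\<lambda>t. eval_mterm N H t e1) (diff_mterms is)) =
     const_coeff (filter (\<lambda>i. i \<noteq> 0) is)
     * H (count_list is 0) (length (filter (\<lambda>i. i \<noteq> 0) is) div 2) 1 0"
proof -
  let ?is = "filter (\<lambda>i. i \<noteq> 0) is" and ?z = "count_list is 0"
  have "sum_list (map (\<lambda>t. eval_mterm N H t e1) (diff_mterms is))
      = sum_list (map (\<lambda>t. eval_mterm N H (add_axis_order ?z t) e1) (diff_mterms ?is))"
    by (subst diff_mterms_axis_split) (simp add: o_def)
  also have "\<dots> = sum_list (map (\<lambda>t. const_part t * H ?z (length ?is div 2) 1 0) (diff_mterms ?is))"
  proof (rule arg_cong[where f=sum_list], rule map_cong[OF refl])
    fix t assume t: "t \<in> set (diff_mterms ?is)"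
    obtain w U p c where tt: "t = (w,U,p,c)" by (cases t) auto
    have U0: "0 \<notin> set U" using diff_mterms_axis_free t tt by blast
    have inv: "p = 0 \<and> 2 * c = length ?is + length U"
      using diff_mterms_degree[of ?is w U p c] t tt by auto
    have cc: "U = [] \<Longrightarrow> c = length ?is div 2" using inv by auto
    show "eval_mterm N H (add_axis_order ?z t) e1 = const_part t * H ?z (length ?is div 2) 1 0"
      using U0 inv cc by (auto simp: tt prod_list_map_e1 tail_sqnorm_e1) (simp add: e1_def)
  qed
  also have "\<dots> = const_coeff ?is * H ?z (length ?is div 2) 1 0"
    by (simp add: const_coeff_def sum_list_mult_const o_def)
  finally show ?thesis .
qed

definition power_profile :: "nat \<Rightarrow> nat \<Rightarrow> nat \<Rightarrow> real \<Rightarrow> real \<Rightarrow> real" where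
  "power_profile l p c a r = (if p = 0 \<and> c \<le> l then fact l / fact (l - c) * r ^ (l - c) else 0)"

lemma power_profile_deriv_tail:
  "(power_profile l p c a has_real_derivative power_profile l p (Suc c) a r) (at r)"
proof (cases "p = 0 \<and> c < l")
  case True
  then obtain d where d: "l - c = Suc d" "l - Suc c = d" by (metis Suc_diff_Suc)
  have "((\<lambda>r. fact l / fact (Suc d) * r ^ Suc d) has_real_derivative
      fact l / fact (Suc d) * (real (Suc d) * r ^ (Suc d - Suc 0))) (at r)"
    by (rule DERIV_cmult, rule DERIV_pow)
  moreover have "fact l / fact (Suc d) * (real (Suc d) * r ^ (Suc d - Suc 0)) = fact l / fact d * r ^ d"
  proof -
    have f: "(fact (Suc d) :: real) = real (Suc d) * fact d" by (simp add: fact_Suc del: of_nat_Suc)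
    have p: "real (Suc d) > 0" "(fact d :: real) > 0" by auto
    show ?thesis unfolding f using p by (simp del: of_nat_Suc)
  qed
  ultimately show ?thesis using True d by (simp add: power_profile_def[abs_def])
next
  case False
  then have "power_profile l p c a = (\<lambda>r. if p = 0 \<and> c = l then fact l else 0)"
    "power_profile l p (Suc c) a r = 0"
    by (auto simp: power_profile_def[abs_def])
  then show ?thesis by simp
qed

lemma power_profile_deriv_axis:
  "((\<lambda>a. power_profile l p c a r) has_real_derivative power_profile l (Suc p) c a r) (at a)"
  by (simp add: power_profile_def)

lemma diff_mterms_power_profile:
  assumes "0 \<notin> set is" "length is = 2 * l" "y 0 = 0" "tail_sqnorm N y = 1"
  shows "sum_list (map (\<lambda>t. eval_mterm N (power_profile l) t y) (diff_mterms is))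
           = const_coeff is * fact l"
proof -
  have "sum_list (map (\<lambda>t. eval_mterm N (power_profile l) t y) (diff_mterms is)) =
     sum_list (map (\<lambda>t. const_part t * fact l) (diff_mterms is))"
  proof (rule arg_cong[where f=sum_list], rule map_cong[OF refl])
    fix t assume t: "t \<in> set (diff_mterms is)"
    obtain w U p c where tt: "t = (w,U,p,c)" by (cases t) auto
    have inv: "p = 0 \<and> 2 * c = length is + length U"
      using diff_mterms_degree[of "is" w U p c] t tt assms(1) by auto
    show "eval_mterm N (power_profile l) t y = const_part t * fact l"
      using inv assms by (cases U) (auto simp: tt power_profile_def)
  qed
  also have "\<dots> = const_coeff is * fact l"
    by (simp add: const_coeff_def sum_list_mult_const o_def)
  finally show ?thesis .
qed

section \<open>The axial profile\<close>

text \<open>If \<open>g n\<close> is the \<open>n\<close>-th derivative of \<open>g 0\<close>, then \<open>profile g p c a r\<close> is the \<open>p\<close>-th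
  derivative in \<open>a\<close> of \<open>g c (a\<^sup>2 + r)\<close>.\<close>
fun profile :: "(nat \<Rightarrow> real \<Rightarrow> real) \<Rightarrow> nat \<Rightarrow> nat \<Rightarrow> real \<Rightarrow> real \<Rightarrow> real" where
  "profile g 0 c a r = g c (a\<^sup>2 + r)"
| "profile g (Suc 0) c a r = 2 * a * g (Suc c) (a\<^sup>2 + r)"
| "profile g (Suc (Suc p)) c a r =
     2 * a * profile g (Suc p) (Suc c) a r + 2 * (real p + 1) * profile g p (Suc c) a r"

locale derivative_chain =
  fixes g :: "nat \<Rightarrow> real \<Rightarrow> real"
  assumes g_deriv: "\<And>n t. 0 < t \<Longrightarrow> (g n has_real_derivative g (Suc n) t) (at t)"

begin

lemma g_chain: "(f has_real_derivative f') (at x) \<Longrightarrow> 0 < f x \<Longrightarrow>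
   ((\<lambda>x. g n (f x)) has_real_derivative g (Suc n) (f x) * f') (at x)"
  by (rule DERIV_chain2[OF g_deriv])

lemma profile_deriv_tail:
  assumes "0 < a\<^sup>2 + r"
  shows "(profile g p c a has_real_derivative profile g p (Suc c) a r) (at r)"
proof (induction p arbitrary: c rule: induct_nat_012)
  case 0
  have "((\<lambda>r. g c (a\<^sup>2 + r)) has_real_derivative g (Suc c) (a\<^sup>2 + r) * 1) (at r)"
    by (rule g_chain) (auto intro!: derivative_eq_intros simp: assms)
  then show ?case by simp
next
  case 1
  have "((\<lambda>r. 2 * a * g (Suc c) (a\<^sup>2 + r)) has_real_derivative
      2 * a * (g (Suc (Suc c)) (a\<^sup>2 + r) * 1)) (at r)"
    by (rule DERIV_cmult, rule g_chain) (auto intro!: derivative_eq_intros simp: assms)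
  then show ?case by simp
next
  case (ge2 p)
  have "((\<lambda>r. 2 * a * profile g (Suc p) (Suc c) a r + 2 * (real p + 1) * profile g p (Suc c) a r)
      has_real_derivative 2 * a * profile g (Suc p) (Suc (Suc c)) a r
        + 2 * (real p + 1) * profile g p (Suc (Suc c)) a r) (at r)"
    by (intro DERIV_add DERIV_cmult ge2.IH)
  then show ?case by simp
qed

lemma profile_deriv_axis:
  assumes "0 < a\<^sup>2 + r"
  shows "((\<lambda>a. profile g p c a r) has_real_derivative profile g (Suc p) c a r) (at a)"
proof (induction p arbitrary: c rule: induct_nat_012)
  case 0
  have "((\<lambda>a. g c (a\<^sup>2 + r)) has_real_derivative g (Suc c) (a\<^sup>2 + r) * (2 * a)) (at a)"
    by (rule g_chain) (auto intro!: derivative_eq_intros simp: assms)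
  then show ?case by (simp add: mult_ac)
next
  case 1
  have "((\<lambda>a. 2 * a * g (Suc c) (a\<^sup>2 + r)) has_real_derivative
      2 * g (Suc c) (a\<^sup>2 + r) + (g (Suc (Suc c)) (a\<^sup>2 + r) * (2 * a)) * (2 * a)) (at a)"
    by (rule DERIV_mult[where f="\<lambda>a. 2 * a", THEN DERIV_cong])
      (auto intro!: derivative_eq_intros g_chain simp: assms)
  then show ?case by (simp add: algebra_simps)
next
  case (ge2 p)
  have lin: "((\<lambda>a. 2 * a) has_real_derivative 2) (at a)"
    by (auto intro!: derivative_eq_intros)
  have "((\<lambda>a. 2 * a * profile g (Suc p) (Suc c) a r + 2 * (real p + 1) * profile g p (Suc c) a r)
      has_real_derivative
        (2 * profile g (Suc p) (Suc c) a r + profile g (Suc (Suc p)) (Suc c) a r * (2 * a))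
        + 2 * (real p + 1) * profile g (Suc p) (Suc c) a r) (at a)"
    by (intro DERIV_add DERIV_cmult DERIV_mult[OF lin] ge2.IH)
  then show ?case by (simp add: algebra_simps)
qed

end

definition axis_coeff :: "nat \<Rightarrow> nat \<Rightarrow> real" where
  "axis_coeff p i = (if 2*i \<le> p then fact p / (fact i * fact (p - 2*i)) * 2^(p - 2*i) else 0)"

lemma axis_coeff_rec:
  "axis_coeff (Suc (Suc p)) (Suc i) = 2 * axis_coeff (Suc p) (Suc i) + 2 * (real p + 1) * axis_coeff p i"
proof (cases "2*i \<le> p")
  case False
  then show ?thesis by (simp add: axis_coeff_def)
next
  case True
  then obtain m where p: "p = 2*i + m" by (metis le_add_diff_inverse)
  have fi: "fact (Suc i) = real (Suc i) * fact i" by (simp del: of_nat_Suc)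
  have fp: "fact (Suc (Suc p)) = real (Suc (Suc p)) * (real (Suc p) * fact p)"
    "fact (Suc p) = real (Suc p) * fact p" by (simp_all del: of_nat_Suc)
  show ?thesis
  proof (cases m)
    case 0
    then show ?thesis using p fi fp
      by (simp add: axis_coeff_def field_simps del: of_nat_Suc fact_Suc) (simp add: algebra_simps)
  next
    case (Suc q)
    have "fact (Suc q) = real (Suc q) * fact q" by (simp del: of_nat_Suc)
    then show ?thesis using p Suc fi fp
      by (simp add: axis_coeff_def field_simps del: of_nat_Suc fact_Suc) (simp add: algebra_simps)
  qed
qed

definition profile_coeff :: "(nat \<Rightarrow> real \<Rightarrow> real) \<Rightarrow> nat \<Rightarrow> nat \<Rightarrow> nat \<Rightarrow> real" where
  "profile_coeff g p c i = axis_coeff p i * g (c + p - i) 1"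

lemma profile_coeff_rec:
  "profile_coeff g (Suc (Suc p)) c (Suc i) =
     2 * profile_coeff g (Suc p) (Suc c) (Suc i) + 2 * (real p + 1) * profile_coeff g p (Suc c) i"
proof (cases "2*i \<le> p")
  case True
  then have "c + Suc (Suc p) - Suc i = c + Suc p - i" "Suc c + Suc p - Suc i = c + Suc p - i"
    "Suc c + p - i = c + Suc p - i" by auto
  then show ?thesis by (simp add: profile_coeff_def axis_coeff_rec algebra_simps)
next
  case False
  then show ?thesis by (simp add: profile_coeff_def axis_coeff_def)
qed

lemma profile_at_e1: "profile g p c 1 0 = (\<Sum>i\<le>p. profile_coeff g p c i)"
proof (induction g p c "1::real" "0::real" rule: profile.induct)
  case (1 g c)
  then show ?case by (simp add: profile_coeff_def axis_coeff_def)
next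
  case (2 g c)
  then show ?case by (simp add: profile_coeff_def axis_coeff_def)
next
  case (3 g p c)
  have first: "profile_coeff g (Suc (Suc p)) c 0 = 2 * profile_coeff g (Suc p) (Suc c) 0"
    by (simp add: profile_coeff_def axis_coeff_def)
  have last: "profile_coeff g (Suc (Suc p)) c (Suc (Suc p)) = 0"
    by (simp add: profile_coeff_def axis_coeff_def)
  have "(\<Sum>i\<le>Suc (Suc p). profile_coeff g (Suc (Suc p)) c i)
      = profile_coeff g (Suc (Suc p)) c 0 + (\<Sum>i\<le>p. profile_coeff g (Suc (Suc p)) c (Suc i))"
    by (subst sum.atMost_Suc_shift) (simp add: last)
  also have "\<dots> = 2 * (\<Sum>i\<le>Suc p. profile_coeff g (Suc p) (Suc c) i)
      + 2 * (real p + 1) * (\<Sum>i\<le>p. profile_coeff g p (Suc c) i)"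
    by (simp add: first profile_coeff_rec sum.atMost_Suc_shift sum.distrib sum_distrib_left
        del: sum.atMost_Suc)
  finally show ?case using 3 by simp
qed

lemma profile_coeff_eq_binomials:
  "profile_coeff g (2*i + m) l i = fact l * fact (2*i + m) *
     (2 ^ m * (g (l+i+m) 1 / fact (l+i+m)) * real ((l+i+m) choose (l+i)) * real ((l+i) choose l))"
proof -
  have b1: "real ((l+i+m) choose (l+i)) = fact (l+i+m) / (fact (l+i) * fact m)"
    using binomial_fact[of "l+i" "l+i+m"] by simp
  have b2: "real ((l+i) choose l) = fact (l+i) / (fact l * fact i)"
    using binomial_fact[of l "l+i"] by simp
  have "(fact (l+i+m) :: real) > 0" "(fact (l+i) :: real) > 0" "(fact l :: real) > 0"
    "(fact i :: real) > 0" "(fact m :: real) > 0" by auto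
  then show ?thesis
    unfolding b1 b2 profile_coeff_def axis_coeff_def by (simp add: add.assoc field_simps)
qed


definition inner_sum :: "(nat \<Rightarrow> real) \<Rightarrow> nat \<Rightarrow> nat \<Rightarrow> real" where
  "inner_sum b k l = (\<Sum>n = (k+1) div 2 .. k - l.
     2 ^ (2*n - k) * b n * real (n choose (k - n)) * real ((k - n) choose l))"

lemma sum_profile_coeff:
  assumes "2*l \<le> k"
  shows "(\<Sum>i\<le>k - 2*l. profile_coeff g (k - 2*l) l i)
           = fact l * fact (k - 2*l) * inner_sum (\<lambda>n. g n 1 / fact n) k l"
proof -
  let ?z = "k - 2*l"
  have "(\<Sum>i\<le>?z. profile_coeff g ?z l i) = (\<Sum>i\<le>?z div 2. profile_coeff g ?z l i)"
    by (rule sum.mono_neutral_right) (auto simp: profile_coeff_def axis_coeff_def)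
  also have "\<dots> = (\<Sum>n = (k+1) div 2 .. k - l. fact l * fact ?z *
      (2 ^ (2*n - k) * (g n 1 / fact n) * real (n choose (k - n)) * real ((k - n) choose l)))"
  proof (rule sum.reindex_bij_witness[of _ "\<lambda>n. k - l - n" "\<lambda>i. k - l - i"])
    fix i assume i: "i \<in> {..?z div 2}"
    show "k - l - (k - l - i) = i" "k - l - i \<in> {(k+1) div 2 .. k - l}" using i assms by auto
    define m where "m = ?z - 2*i"
    have kk: "k - l - i = l+i+m" "?z = 2*i + m" "2*(l+i+m) - k = m" "k - (l+i+m) = l+i"
      using i assms unfolding m_def by auto
    show "fact l * fact ?z * (2 ^ (2*(k-l-i) - k) * (g (k-l-i) 1 / fact (k-l-i))
        * real ((k-l-i) choose (k - (k-l-i))) * real ((k - (k-l-i)) choose l)) = profile_coeff g ?z l i"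
      unfolding kk by (rule profile_coeff_eq_binomials[symmetric])
  next
    fix n assume n: "n \<in> {(k+1) div 2 .. k - l}"
    show "k - l - (k - l - n) = n" "k - l - n \<in> {..?z div 2}" using n assms by auto
  qed
  finally show ?thesis by (simp add: inner_sum_def sum_distrib_left)
qed

section \<open>Counting multi-indices\<close>

definition words :: "'a set \<Rightarrow> nat \<Rightarrow> 'a list set" where
  "words A k = {xs. set xs \<subseteq> A \<and> length xs = k}"

lemma sum_words_Suc:
  assumes "finite A"
  shows "(\<Sum>v\<in>words A (Suc k). G v) = (\<Sum>v\<in>words A k. \<Sum>i\<in>A. G (i # v))"
proof -
  have "words A (Suc k) = (\<lambda>(xs, n). n#xs) ` (words A k \<times> A)"
    unfolding words_def by (rule lists_length_Suc_eq)
  moreover have "inj_on (\<lambda>(xs, n). n#xs) (words A k \<times> A)"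
    by (auto simp: inj_on_def)
  ultimately have "(\<Sum>v\<in>words A (Suc k). G v) = (\<Sum>p\<in>words A k \<times> A. G (snd p # fst p))"
    by (simp add: sum.reindex split_def)
  also have "\<dots> = (\<Sum>v\<in>words A k. \<Sum>i\<in>A. G (i # v))"
    by (simp add: sum.cartesian_product split_def)
  finally show ?thesis .
qed

lemma words_0: "words A 0 = {[]}" by (auto simp: words_def)

lemma multi_idx_eq_words: "multi_idx N k = words {..<N} k"
  by (auto simp: multi_idx_def words_def)

lemma sum_binomial_Suc_split:
  fixes G :: "nat \<Rightarrow> real"
  shows "(\<Sum>j\<le>Suc k. real (Suc k choose j) * G j)
           = (\<Sum>j\<le>k. real (k choose j) * G j) + (\<Sum>j\<le>k. real (k choose j) * G (Suc j))"
proof -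
  have "(\<Sum>j\<le>Suc k. real (Suc k choose j) * G j)
      = (G 0 + (\<Sum>j\<le>k. real (k choose Suc j) * G (Suc j))) + (\<Sum>j\<le>k. real (k choose j) * G (Suc j))"
    by (simp add: sum.atMost_Suc_shift sum.distrib algebra_simps del: sum.atMost_Suc)
  also have "G 0 + (\<Sum>j\<le>k. real (k choose Suc j) * G (Suc j)) = (\<Sum>j\<le>Suc k. real (k choose j) * G j)"
    by (simp add: sum.atMost_Suc_shift del: sum.atMost_Suc)
  finally show ?thesis by simp
qed

lemma sum_words_by_axis_count:
  fixes F :: "nat \<Rightarrow> nat list \<Rightarrow> real"
  assumes N: "0 < N"
  shows "(\<Sum>is\<in>words {..<N} k. F (count_list is 0) (filter (\<lambda>i. i \<noteq> 0) is)) =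
     (\<Sum>j\<le>k. real (k choose j) * (\<Sum>v\<in>words {1..<N} j. F (k - j) v))"
proof (induction k arbitrary: F)
  case 0
  then show ?case by (simp add: words_0)
next
  case (Suc k)
  have split: "{..<N} = insert 0 {1..<N}" using N by auto
  have "(\<Sum>is\<in>words {..<N} (Suc k). F (count_list is 0) (filter (\<lambda>i. i \<noteq> 0) is))
      = (\<Sum>is\<in>words {..<N} k. \<Sum>i\<in>{..<N}. F (count_list (i # is) 0) (filter (\<lambda>i. i \<noteq> 0) (i # is)))"
    by (rule sum_words_Suc) simp
  also have "\<dots> = (\<Sum>is\<in>words {..<N} k. F (Suc (count_list is 0)) (filter (\<lambda>i. i \<noteq> 0) is)
       + (\<Sum>i\<in>{1..<N}. F (count_list is 0) (i # filter (\<lambda>i. i \<noteq> 0) is)))"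
    unfolding split by (intro sum.cong refl) (simp add: sum.insert)
  also have "\<dots> = (\<Sum>j\<le>k. real (k choose j) * (\<Sum>v\<in>words {1..<N} j. F (Suc (k - j)) v))
       + (\<Sum>j\<le>k. real (k choose j) * (\<Sum>v\<in>words {1..<N} j. \<Sum>i\<in>{1..<N}. F (k - j) (i # v)))"
    using Suc.IH[of "\<lambda>z v. F (Suc z) v"] Suc.IH[of "\<lambda>z v. \<Sum>i\<in>{1..<N}. F z (i # v)"]
    by (simp add: sum.distrib)
  also have "\<dots> = (\<Sum>j\<le>k. real (k choose j) * (\<Sum>v\<in>words {1..<N} j. F (Suc k - j) v))
       + (\<Sum>j\<le>k. real (k choose j) * (\<Sum>v\<in>words {1..<N} (Suc j). F (Suc k - Suc j) v))"
    by (intro arg_cong2[where f="(+)"] sum.cong refl) (auto simp: sum_words_Suc Suc_diff_le)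
  also have "\<dots> = (\<Sum>j\<le>Suc k. real (Suc k choose j) * (\<Sum>v\<in>words {1..<N} j. F (Suc k - j) v))"
    by (rule sum_binomial_Suc_split[symmetric])
  finally show ?case .
qed

lemma map_Suc_words: "map Suc ` words {..<M} k = words {1..<Suc M} k"
proof
  show "map Suc ` words {..<M} k \<subseteq> words {1..<Suc M} k" by (auto simp: words_def)
  show "words {1..<Suc M} k \<subseteq> map Suc ` words {..<M} k"
  proof
    fix v assume v: "v \<in> words {1..<Suc M} k"
    have "map Suc (map (\<lambda>i. i - 1) v) = v"
      unfolding map_map o_def by (rule map_idI) (use v in \<open>auto simp: words_def\<close>)
    then have "v = map Suc (map (\<lambda>i. i - 1) v)" by simp
    moreover have "map (\<lambda>i. i - 1) v \<in> words {..<M} k" using v by (force simp: words_def)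
    ultimately show "v \<in> map Suc ` words {..<M} k" by blast
  qed
qed

lemma sum_atMost_even:
  fixes X :: "nat \<Rightarrow> real"
  assumes "\<And>j. odd j \<Longrightarrow> X j = 0"
  shows "(\<Sum>j\<le>k. X j) = (\<Sum>l=0..k div 2. X (2*l))"
proof -
  have "(\<Sum>l=0..k div 2. X (2*l)) = (\<Sum>j\<in>(\<lambda>l. 2*l) ` {0..k div 2}. X j)"
    by (rule sum.reindex[symmetric, unfolded o_def]) (simp add: inj_on_def)
  also have "\<dots> = (\<Sum>j\<le>k. X j)"
  proof (rule sum.mono_neutral_left)
    show "(\<lambda>l. 2*l) ` {0..k div 2} \<subseteq> {..k}" by auto
    show "\<forall>j\<in>{..k} - (\<lambda>l. 2*l) ` {0..k div 2}. X j = 0"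
    proof
      fix j assume j: "j \<in> {..k} - (\<lambda>l. 2*l) ` {0..k div 2}"
      have "odd j"
      proof
        assume "even j"
        then obtain l where "j = 2*l" by blast
        with j show False by auto
      qed
      then show "X j = 0" by (rule assms)
    qed
  qed simp
  finally show ?thesis by simp
qed

lemma enorm_e1: "0 < M \<Longrightarrow> enorm M e1 = 1"
proof -
  assume M: "0 < M"
  have "(\<Sum>i<M. (e1 i)\<^sup>2) = (\<Sum>i\<in>{0}. (e1 i)\<^sup>2)"
    by (rule sum.mono_neutral_right) (auto simp: M e1_def)
  then show ?thesis by (simp add: enorm_def e1_def)
qed

lemma iter_pdiff_map_Suc:
  "iter_pdiff (map Suc is) (\<lambda>x. f (x \<circ> Suc)) y = iter_pdiff is f (y \<circ> Suc)"
proof (induction "is" arbitrary: y)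
  case Nil then show ?case by simp
next
  case (Cons i "is")
  have e: "(y(Suc i := v)) \<circ> Suc = (y \<circ> Suc)(i := v)" for v by (rule ext) simp
  show ?case by (simp only: iter_pdiff.simps list.map pdiff_def Cons.IH e) (simp add: o_def)
qed

lemma iter_pdiff_tail_power:
  assumes v: "set v \<subseteq> {1..<N}" "length v = 2*l" and y: "y 0 = 0" "tail_sqnorm N y = 1"
    and base: "\<And>x. 0 < tail_sqnorm N x \<Longrightarrow> u x = tail_sqnorm N x ^ l"
  shows "iter_pdiff v u y = const_coeff v * fact l"
proof -
  have profile_base: "u x = power_profile l 0 0 (x 0) (tail_sqnorm N x)" if "0 < tail_sqnorm N x" for x
    using base[OF that] by (simp add: power_profile_def)
  have "iter_pdiff v u y = sum_list (map (\<lambda>t. eval_mterm N (power_profile l) t y) (diff_mterms v))"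
  proof (rule iter_pdiff_eq_diff_mterms[where Dom = "{x. 0 < tail_sqnorm N x}"])
    show "eventually (\<lambda>t. x(j := x j + t) \<in> {x. 0 < tail_sqnorm N x}) (nhds 0)"
      if "x \<in> {x. 0 < tail_sqnorm N x}" for x j
      using eventually_pos_line[where F="tail_sqnorm N", OF continuous_tail_sqnorm_line, of x j] that
      by simp
  qed (use v y in \<open>auto simp: power_profile_deriv_tail power_profile_deriv_axis profile_base\<close>)
  also have "\<dots> = const_coeff v * fact l"
    by (rule diff_mterms_power_profile) (use v y in auto)
  finally show ?thesis .
qed

lemma gamma_tail_words:
  assumes N: "2 \<le> N"
  shows "gamma (N-1) (real (2*l)) (2*l)
           = (\<Sum>v\<in>words {1..<N} (2*l). (const_coeff v * fact l)\<^sup>2)"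
proof -
  define f where "f = (\<lambda>x. enorm (N-1) x powr real (2*l))"
  define y :: "nat \<Rightarrow> real" where "y = (\<lambda>i. if i = 1 then 1 else 0)"
  have ye: "y \<circ> Suc = e1" by (rule ext) (simp add: y_def e1_def)
  have yr: "tail_sqnorm N y = 1"
  proof -
    have "(\<Sum>i\<in>{1..<N}. (y i)\<^sup>2) = (\<Sum>i\<in>{1}. (y i)\<^sup>2)"
      by (rule sum.mono_neutral_right) (use N in \<open>auto simp: y_def\<close>)
    then show ?thesis by (simp add: tail_sqnorm_def y_def)
  qed
  have base: "f (x \<circ> Suc) = tail_sqnorm N x ^ l" if x: "0 < tail_sqnorm N x" for x
  proof -
    have "{1..<N} = {Suc 0..<Suc (N-1)}" using N by auto
    then have "tail_sqnorm N x = (\<Sum>i<N-1. (x (Suc i))\<^sup>2)"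
      unfolding tail_sqnorm_def by (simp only: sum.shift_bounds_Suc_ivl atLeast0LessThan)
    then have "f (x \<circ> Suc) = sqrt (tail_sqnorm N x) powr real (2*l)"
      by (simp add: f_def enorm_def)
    also have "\<dots> = sqrt (tail_sqnorm N x) ^ (2*l)" by (rule powr_realpow) (use x in auto)
    also have "\<dots> = tail_sqnorm N x ^ l" using x by (simp add: power_mult)
    finally show ?thesis .
  qed
  have "gamma (N-1) (real (2*l)) (2*l) = (\<Sum>is\<in>multi_idx (N-1) (2*l). (iter_pdiff is f e1)\<^sup>2)"
    using N by (simp add: gamma_def enorm_e1 grad_norm_def f_def sum_nonneg)
  also have "\<dots> = (\<Sum>is\<in>words {..<N-1} (2*l). (iter_pdiff (map Suc is) (\<lambda>x. f (x \<circ> Suc)) y)\<^sup>2)"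
    by (simp add: multi_idx_eq_words iter_pdiff_map_Suc ye)
  also have "\<dots> = (\<Sum>v\<in>map Suc ` words {..<N-1} (2*l). (iter_pdiff v (\<lambda>x. f (x \<circ> Suc)) y)\<^sup>2)"
    by (rule sum.reindex[symmetric, unfolded o_def]) (simp add: inj_on_def)
  also have "\<dots> = (\<Sum>v\<in>words {1..<N} (2*l). (iter_pdiff v (\<lambda>x. f (x \<circ> Suc)) y)\<^sup>2)"
    using map_Suc_words[of "N-1" "2*l"] N by (simp add: Suc_diff_le)
  also have "\<dots> = (\<Sum>v\<in>words {1..<N} (2*l). (const_coeff v * fact l)\<^sup>2)"
    using yr base by (intro sum.cong refl arg_cong[where f="\<lambda>z. z\<^sup>2"] iter_pdiff_tail_power)
      (auto simp: words_def y_def)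
  finally show ?thesis .
qed

lemma iter_pdiff_radial_at_e1:
  assumes g: "derivative_chain g" and "set is \<subseteq> {..<N}"
    and base: "\<And>x. 0 < (x 0)\<^sup>2 + tail_sqnorm N x \<Longrightarrow> u x = g 0 ((x 0)\<^sup>2 + tail_sqnorm N x)"
  shows "iter_pdiff is u e1 = const_coeff (filter (\<lambda>i. i \<noteq> 0) is)
           * profile g (count_list is 0) (length (filter (\<lambda>i. i \<noteq> 0) is) div 2) 1 0"
proof -
  define Dom where "Dom = {x::nat\<Rightarrow>real. 0 < (x 0)\<^sup>2 + tail_sqnorm N x}"
  have "iter_pdiff is u e1 = sum_list (map (\<lambda>t. eval_mterm N (profile g) t e1) (diff_mterms is))"
  proof (rule iter_pdiff_eq_diff_mterms[where Dom = Dom])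
    show "eventually (\<lambda>t. x(j := x j + t) \<in> Dom) (nhds 0)" if "x \<in> Dom" for x j
    proof -
      have "continuous (at 0) (\<lambda>t. ((x(j := x j + t)) 0)\<^sup>2 + tail_sqnorm N (x(j := x j + t)))"
        by (intro continuous_intros continuous_line_coord continuous_tail_sqnorm_line)
      from eventually_pos_line[where F = "\<lambda>x. (x 0)\<^sup>2 + tail_sqnorm N x", OF this] that
      show ?thesis by (simp add: Dom_def)
    qed
    show "e1 \<in> Dom" unfolding Dom_def by (simp add: tail_sqnorm_e1) (simp add: e1_def)
  qed (use assms derivative_chain.profile_deriv_tail[OF g] derivative_chain.profile_deriv_axis[OF g]
       in \<open>auto simp: Dom_def\<close>)
  then show ?thesis by (simp add: diff_mterms_at_e1)
qed

text \<open>\<open>b n\<close> is the \<open>n\<close>-th Taylor coefficient at \<open>1\<close> of the \<open>G\<close> with \<open>u(x) = G(|x|\<^sup>2)\<close>.\<close>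
definition radial_sum :: "nat \<Rightarrow> (nat \<Rightarrow> real) \<Rightarrow> nat \<Rightarrow> real" where
  "radial_sum N b k = fact k * (\<Sum>l = 0..k div 2.
     fact (k - 2*l) / fact (2*l) * (inner_sum b k l)\<^sup>2 * gamma (N - 1) (real (2*l)) (2*l))"

lemma sum_sq_iter_pdiff_radial:
  assumes N: "2 \<le> N" and g: "derivative_chain g"
    and base: "\<And>x. 0 < (x 0)\<^sup>2 + tail_sqnorm N x \<Longrightarrow> u x = g 0 ((x 0)\<^sup>2 + tail_sqnorm N x)"
  shows "(\<Sum>is\<in>multi_idx N k. (iter_pdiff is u e1)\<^sup>2) = radial_sum N (\<lambda>n. g n 1 / fact n) k"
proof -
  define X where "X j = real (k choose j)
    * (\<Sum>v\<in>words {1..<N} j. (const_coeff v * profile g (k - j) (j div 2) 1 0)\<^sup>2)" for j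
  have "(\<Sum>is\<in>multi_idx N k. (iter_pdiff is u e1)\<^sup>2)
      = (\<Sum>is\<in>words {..<N} k. (\<lambda>z v. (const_coeff v * profile g z (length v div 2) 1 0)\<^sup>2)
           (count_list is 0) (filter (\<lambda>i. i \<noteq> 0) is))"
    by (rule sum.cong)
      (auto simp: iter_pdiff_radial_at_e1[OF g _ base] multi_idx_eq_words words_def)
  also have "\<dots> = (\<Sum>j\<le>k. real (k choose j) *
      (\<Sum>v\<in>words {1..<N} j. (const_coeff v * profile g (k - j) (length v div 2) 1 0)\<^sup>2))"
    by (rule sum_words_by_axis_count) (use N in auto)
  also have "\<dots> = (\<Sum>j\<le>k. X j)"
    unfolding X_def by (intro sum.cong refl arg_cong2[where f="(*)"]) (auto simp: words_def)
  also have "\<dots> = (\<Sum>l=0..k div 2. X (2*l))"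
  proof (rule sum_atMost_even)
    fix j :: nat assume "odd j"
    then have "const_coeff v = 0" if "v \<in> words {1..<N} j" for v
      using that by (intro const_coeff_odd) (auto simp: words_def)
    then show "X j = 0" by (simp add: X_def)
  qed
  also have "\<dots> = radial_sum N (\<lambda>n. g n 1 / fact n) k"
    unfolding radial_sum_def sum_distrib_left
  proof (rule sum.cong[OF refl])
    fix l assume "l \<in> {0..k div 2}"
    then have lk: "2*l \<le> k" by auto
    let ?inner = "inner_sum (\<lambda>n. g n 1 / fact n) k l"
    have H: "profile g (k - 2*l) l 1 0 = fact l * fact (k - 2*l) * ?inner"
      unfolding profile_at_e1 by (rule sum_profile_coeff[OF lk])
    have gam: "gamma (N - 1) (real (2*l)) (2*l)
        = (fact l)\<^sup>2 * (\<Sum>v\<in>words {1..<N} (2*l). (const_coeff v)\<^sup>2)"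
      using gamma_tail_words[OF N, of l] by (simp add: power_mult_distrib sum_distrib_left mult.commute)
    have C: "real (k choose (2*l)) = fact k / (fact (2*l) * fact (k - 2*l))"
      by (rule binomial_fact[OF lk])
    have "X (2*l) = real (k choose (2*l)) * (profile g (k - 2*l) l 1 0)\<^sup>2
        * (\<Sum>v\<in>words {1..<N} (2*l). (const_coeff v)\<^sup>2)"
      by (simp add: X_def power_mult_distrib sum_distrib_left sum_distrib_right mult_ac)
    also have "\<dots> = fact k * (fact (k - 2*l) / fact (2*l) * ?inner\<^sup>2
        * gamma (N - 1) (real (2*l)) (2*l))"
      unfolding H C gam by (simp add: power2_eq_square field_simps)
    finally show "X (2*l) = fact k * (fact (k - 2*l) / fact (2*l) * ?inner\<^sup>2
        * gamma (N - 1) (real (2*l)) (2*l))" .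
  qed
  finally show ?thesis .
qed

lemma enorm_axis_tail: "0 < N \<Longrightarrow> enorm N x = sqrt ((x 0)\<^sup>2 + tail_sqnorm N x)"
  by (simp add: enorm_def tail_sqnorm_def lessThan_atLeast0 sum.atLeast_Suc_lessThan)

definition powr_derivs :: "real \<Rightarrow> nat \<Rightarrow> real \<Rightarrow> real" where
  "powr_derivs q n t = (\<Prod>i<n. (q - real i)) * t powr (q - real n)"

lemma derivative_chain_powr: "derivative_chain (powr_derivs q)"
proof
  fix n :: nat and t :: real assume t: "0 < t"
  have "((\<lambda>t. (\<Prod>i<n. (q - real i)) * t powr (q - real n)) has_real_derivative
      (\<Prod>i<n. (q - real i)) * ((q - real n) * t powr (q - real n - 1))) (at t)"
    by (rule DERIV_cmult, rule has_real_derivative_powr[OF t])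
  moreover have "q - real (Suc n) = q - real n - 1" by simp
  ultimately show "(powr_derivs q n has_real_derivative powr_derivs q (Suc n) t) (at t)"
    unfolding powr_derivs_def by (simp only: prod.lessThan_Suc mult_ac)
qed

lemma powr_derivs_1: "powr_derivs q n 1 / fact n = q gchoose n"
  by (simp add: powr_derivs_def gbinomial_prod_rev atLeast0LessThan)

lemma gamma_recursion:
  assumes N: "2 \<le> N"
  shows "gamma N s k = radial_sum N (\<lambda>n. (s/2) gchoose n) k"
proof -
  have base: "enorm N x powr s = powr_derivs (s/2) 0 ((x 0)\<^sup>2 + tail_sqnorm N x)"
    if x: "0 < (x 0)\<^sup>2 + tail_sqnorm N x" for x
  proof -
    have "enorm N x powr s = sqrt ((x 0)\<^sup>2 + tail_sqnorm N x) powr s"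
      using N by (simp add: enorm_axis_tail)
    also have "\<dots> = ((x 0)\<^sup>2 + tail_sqnorm N x) powr (s/2)"
      using x by (simp add: powr_half_sqrt[symmetric] powr_powr)
    finally show ?thesis by (simp add: powr_derivs_def)
  qed
  have "gamma N s k = (\<Sum>is\<in>multi_idx N k. (iter_pdiff is (\<lambda>x. enorm N x powr s) e1)\<^sup>2)"
    using N by (simp add: gamma_def enorm_e1 grad_norm_def sum_nonneg)
  also have "\<dots> = radial_sum N (\<lambda>n. powr_derivs (s/2) n 1 / fact n) k"
    by (rule sum_sq_iter_pdiff_radial[OF N derivative_chain_powr base])
  finally show ?thesis by (simp only: powr_derivs_1)
qed

lemma inner_sum_even_binomial:
  assumes "l \<le> m"
  shows "inner_sum (\<lambda>n. real m gchoose n) (2*m) l = real (m choose l)"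
proof -
  have "inner_sum (\<lambda>n. real m gchoose n) (2*m) l
      = (\<Sum>n = m .. 2*m - l. if n = m then real (m choose l) else 0)"
    unfolding inner_sum_def
    by (intro sum.cong) (auto simp: binomial_gbinomial[symmetric])
  also have "\<dots> = real (m choose l)" using assms by simp
  finally show ?thesis .
qed

lemma gamma_even_recursion:
  assumes N: "2 \<le> N"
  shows "gamma N (real (2*m)) (2*m) =
             fact (2*m) * (\<Sum>l = 0..m.
               fact (2*(m - l)) / fact (2*l) * (real (m choose l))\<^sup>2
               * gamma (N - 1) (real (2*l)) (2*l))"
proof -
  have "gamma N (real (2*m)) (2*m) = radial_sum N (\<lambda>n. real m gchoose n) (2*m)"
    using gamma_recursion[OF N] by simp
  also have "\<dots> = fact (2*m) * (\<Sum>l = 0..m.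
      fact (2*(m - l)) / fact (2*l) * (real (m choose l))\<^sup>2 * gamma (N - 1) (real (2*l)) (2*l))"
    unfolding radial_sum_def
    by (intro arg_cong2[where f="(*)"] refl sum.cong)
      (auto simp: inner_sum_even_binomial right_diff_distrib')
  finally show ?thesis .
qed

definition ln_derivs :: "nat \<Rightarrow> real \<Rightarrow> real" where
  "ln_derivs n t = (if n = 0 then ln t / 2 else (-1) ^ (n - 1) * fact (n - 1) / 2 * t powr (- real n))"

lemma derivative_chain_ln: "derivative_chain ln_derivs"
proof
  fix n :: nat and t :: real assume t: "0 < t"
  show "(ln_derivs n has_real_derivative ln_derivs (Suc n) t) (at t)"
  proof (cases n)
    case 0
    have "((\<lambda>t. ln t / 2) has_real_derivative inverse t / 2) (at t)"
      using t by (auto intro!: derivative_eq_intros simp: field_simps)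
    moreover have "inverse t / 2 = ln_derivs (Suc 0) t" using t by (simp add: ln_derivs_def powr_minus)
    ultimately show ?thesis using 0 by (simp add: ln_derivs_def[abs_def])
  next
    case (Suc m)
    have "((\<lambda>t. (-1) ^ m * fact m / 2 * t powr (- real (Suc m))) has_real_derivative
       (-1) ^ m * fact m / 2 * (- real (Suc m) * t powr (- real (Suc m) - 1))) (at t)"
      by (rule DERIV_cmult, rule has_real_derivative_powr[OF t])
    moreover have "(-1) ^ m * fact m / 2 * (- real (Suc m) * t powr (- real (Suc m) - 1))
        = (-1) ^ Suc m * fact (Suc m) / 2 * t powr (- real (Suc (Suc m)))"
    proof -
      have e: "- real (Suc m) - 1 = - real (Suc (Suc m))" by simp
      have f: "(fact (Suc m) :: real) = real (Suc m) * fact m" by (simp add: fact_Suc del: of_nat_Suc)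
      show ?thesis unfolding e f power_Suc by (simp only: mult_ac divide_inverse mult_minus_left mult_minus_right)
    qed
    ultimately show ?thesis using Suc by (simp add: ln_derivs_def[abs_def])
  qed
qed

lemma ln_derivs_1:
  assumes "1 \<le> n"
  shows "ln_derivs n 1 / fact n = - ((-1) ^ n / (2 * real n))"
proof -
  obtain m where m: "n = Suc m" using assms by (cases n) auto
  have "(fact (Suc m) :: real) = real (Suc m) * fact m" by (simp del: of_nat_Suc)
  then show ?thesis by (simp add: ln_derivs_def m field_simps del: of_nat_Suc fact_Suc)
qed

text \<open>The Taylor coefficients of \<open>ln t / 2\<close> at \<open>t = 1\<close> are \<open>(-1)^(n-1)/(2n)\<close>; the paper's
  opposite sign is immaterial because the inner sums enter squared.\<close>
lemma ell_recursion:
  assumes N: "2 \<le> N" and k: "k \<ge> 1"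
  shows "ell N k = radial_sum N (\<lambda>n. (-1) ^ n / (2 * real n)) k"
proof -
  have "inner_sum (\<lambda>n. ln_derivs n 1 / fact n) k l
      = - inner_sum (\<lambda>n. (-1) ^ n / (2 * real n)) k l" for l
  proof -
    have "1 \<le> n" if "n \<in> {(k+1) div 2 .. k - l}" for n
      using k that by auto
    then show ?thesis unfolding inner_sum_def sum_negf[symmetric]
      by (intro sum.cong refl) (simp only: ln_derivs_1 mult_minus_left mult_minus_right)
  qed
  then have signs: "radial_sum N (\<lambda>n. ln_derivs n 1 / fact n) k
      = radial_sum N (\<lambda>n. (-1) ^ n / (2 * real n)) k"
    by (simp add: radial_sum_def)
  have "ell N k = (\<Sum>is\<in>multi_idx N k. (iter_pdiff is (\<lambda>x. ln (enorm N x)) e1)\<^sup>2)"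
    using N by (simp add: ell_def enorm_e1 grad_norm_def sum_nonneg)
  also have "\<dots> = radial_sum N (\<lambda>n. ln_derivs n 1 / fact n) k"
    by (rule sum_sq_iter_pdiff_radial[OF N derivative_chain_ln])
      (use N in \<open>simp add: enorm_axis_tail ln_sqrt ln_derivs_def\<close>)
  finally show ?thesis by (simp only: signs)
qed

theorem lemma3p2:
  fixes N :: nat
  assumes "N \<ge> 2"
  shows "(\<forall>(k::nat) (s::real).
           gamma N s k =
             fact k * (\<Sum>l = 0..k div 2.
               fact (k - 2*l) / fact (2*l) *
               (\<Sum>n = (k+1) div 2 .. k - l.
                  2 ^ (2*n - k) * ((s/2) gchoose n) * real (n choose (k - n)) * real ((k - n) choose l))\<^sup>2
               * gamma (N - 1) (real (2*l)) (2*l)))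
       \<and> (\<forall>m::nat.
           gamma N (real (2*m)) (2*m) =
             fact (2*m) * (\<Sum>l = 0..m.
               fact (2*(m - l)) / fact (2*l) * (real (m choose l))\<^sup>2
               * gamma (N - 1) (real (2*l)) (2*l)))
       \<and> (\<forall>k::nat. k \<ge> 1 \<longrightarrow>
           ell N k =
             fact k * (\<Sum>l = 0..k div 2.
               fact (k - 2*l) / fact (2*l) *
               (\<Sum>n = (k+1) div 2 .. k - l.
                  2 ^ (2*n - k) * ((-1) ^ n / (2 * real n)) * real (n choose (k - n)) * real ((k - n) choose l))\<^sup>2
               * gamma (N - 1) (real (2*l)) (2*l)))"
  using gamma_recursion[OF assms] gamma_even_recursion[OF assms] ell_recursion[OF assms]
  unfolding radial_sum_def inner_sum_def by blast

end
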